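(* Let $\mathcal{X}=\{1,\ldots,n\}$, let $p=(p(1),\ldots,p(n))$ be a probability vector with $p(1)\geq\cdots\geq p(n)>0$ (the prior of $X$), and let $k<n$ be a positive integer. Let $j^*:=\min\{j:1\leq j\leq k,\ p(j)\leq \sum_{i=j}^n p(i)/(k-j+1)\}$ and let $\pi=(\pi_1,\ldots,\pi_k)$ with $\pi_l=p(l)$ for $l\leq j^*-1$ and $\pi_l=\sum_{i=j^*}^n p(i)/(k-j^*+1)$ for $j^*\leq l\leq k$. Then for every generalised entropy $(\eta,F)$ and every feasible channel, $H(X\mid Y)\leq H(\pi)=\eta(F(\pi))$.
   Context: Generalised entropy: a pair $(\eta,F)$ where $F$ is a bounded real-valued function on probability vectors of every finite length that is symmetric (unchanged by permuting entries) and expansible (unchanged by appending zero entries), and $\eta$ is a real function, such that either $\eta$ is increasing and $F$ concave, or $\eta$ is decreasing and $F$ convex. $H(X\mid Y)=\eta\big(\sum_{y:\,p(y)>0}p(y)F(p_{X\mid y})\big)$ with $p_{X\mid y}=(p(x\mid y))_{x\in\mathcal{X}}$. A channel is a discrete output set $\mathcal{Y}$ with conditional probabilities $p(y\mid x)\geq0$, $\sum_y p(y\mid x)=1$; $Y$ is its output when the input is $X\sim p$, with $p(y)=\sum_x p(x)p(y\mid x)$ and $p(x\mid y)=p(x)p(y\mid x)/p(y)$. The pre-image of $y$ is $\{x:p(y\mid x)>0\}$; the channel is feasible if every pre-image has at most $k$ elements. *)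

theory Defs
  imports "HOL-Analysis.Analysis" "HOL-Library.Multiset"
begin

definition prob_vec :: "real list \<Rightarrow> bool" where
  "prob_vec xs \<longleftrightarrow> (\<forall>x\<in>set xs. 0 \<le> x) \<and> sum_list xs = 1"

definition concave_ent :: "(real list \<Rightarrow> real) \<Rightarrow> bool" where
  "concave_ent F \<longleftrightarrow> (\<forall>xs ys t. prob_vec xs \<longrightarrow> prob_vec ys \<longrightarrow> length xs = length ys
     \<longrightarrow> 0 \<le> t \<longrightarrow> t \<le> 1
     \<longrightarrow> t * F xs + (1 - t) * F ys \<le> F (map2 (\<lambda>a b. t * a + (1 - t) * b) xs ys))"

definition convex_ent :: "(real list \<Rightarrow> real) \<Rightarrow> bool" where
  "convex_ent F \<longleftrightarrow> (\<forall>xs ys t. prob_vec xs \<longrightarrow> prob_vec ys \<longrightarrow> length xs = length ys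
     \<longrightarrow> 0 \<le> t \<longrightarrow> t \<le> 1
     \<longrightarrow> F (map2 (\<lambda>a b. t * a + (1 - t) * b) xs ys) \<le> t * F xs + (1 - t) * F ys)"

definition gen_entropy :: "(real \<Rightarrow> real) \<Rightarrow> (real list \<Rightarrow> real) \<Rightarrow> bool" where
  "gen_entropy \<eta> F \<longleftrightarrow>
     (\<exists>B. \<forall>xs. prob_vec xs \<longrightarrow> \<bar>F xs\<bar> \<le> B) \<and>
     (\<forall>xs ys. prob_vec xs \<longrightarrow> mset xs = mset ys \<longrightarrow> F ys = F xs) \<and>
     (\<forall>xs. prob_vec xs \<longrightarrow> F (xs @ [0]) = F xs) \<and>
     ((mono \<eta> \<and> concave_ent F) \<or> (antimono \<eta> \<and> convex_ent F))"

text \<open>A channel with input set {1..n}: W x y = p(y|x).\<close>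
definition channel :: "nat \<Rightarrow> (nat \<Rightarrow> 'y \<Rightarrow> real) \<Rightarrow> bool" where
  "channel n W \<longleftrightarrow> (\<forall>x\<in>{1..n}. (\<forall>y. 0 \<le> W x y) \<and> ((\<lambda>y. W x y) has_sum 1) UNIV)"

definition feasible :: "nat \<Rightarrow> nat \<Rightarrow> (nat \<Rightarrow> 'y \<Rightarrow> real) \<Rightarrow> bool" where
  "feasible n k W \<longleftrightarrow> (\<forall>y. card {x\<in>{1..n}. 0 < W x y} \<le> k)"

definition out_prob :: "nat \<Rightarrow> (nat \<Rightarrow> real) \<Rightarrow> (nat \<Rightarrow> 'y \<Rightarrow> real) \<Rightarrow> 'y \<Rightarrow> real" where
  "out_prob n p W y = (\<Sum>x=1..n. p x * W x y)"

definition post :: "nat \<Rightarrow> (nat \<Rightarrow> real) \<Rightarrow> (nat \<Rightarrow> 'y \<Rightarrow> real) \<Rightarrow> 'y \<Rightarrow> real list" where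
  "post n p W y = map (\<lambda>x. p x * W x y / out_prob n p W y) [1..<n+1]"

definition cond_ent :: "(real \<Rightarrow> real) \<Rightarrow> (real list \<Rightarrow> real) \<Rightarrow> nat \<Rightarrow> (nat \<Rightarrow> real)
    \<Rightarrow> (nat \<Rightarrow> 'y \<Rightarrow> real) \<Rightarrow> real" where
  "cond_ent \<eta> F n p W =
     \<eta> (\<Sum>\<^sub>\<infinity>y\<in>{y. 0 < out_prob n p W y}. out_prob n p W y * F (post n p W y))"

definition jstar :: "nat \<Rightarrow> (nat \<Rightarrow> real) \<Rightarrow> nat \<Rightarrow> nat" where
  "jstar n p k = (LEAST j. 1 \<le> j \<and> j \<le> k \<and>
      p j \<le> (\<Sum>i=j..n. p i) / real (k - j + 1))"

definition pi_vec :: "nat \<Rightarrow> (nat \<Rightarrow> real) \<Rightarrow> nat \<Rightarrow> real list" where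
  "pi_vec n p k = map (\<lambda>l. if l \<le> jstar n p k - 1 then p l
      else (\<Sum>i=jstar n p k..n. p i) / real (k - jstar n p k + 1)) [1..<k+1]"

end

theory Submission
  imports Defs
begin

(* Let r be the average, weighted by the output distribution, of the posteriors p_{X|y}, each
   sorted decreasingly. By symmetry of F and Jensen's inequality, in the concave case the average
   of F over the posteriors is at most F(r). The vector r is decreasing; it vanishes beyond
   position k, because every posterior of a feasible channel has at most k nonzero entries; and
   its prefix sums dominate those of p, because sorting can only increase prefix sums. Every such
   vector majorizes pi (padded with zeros): pi agrees with p up to j*-1 and is constant from j* to
   k, where a decreasing vector does at least as well on every initial segment. Symmetric concave
   functions are Schur-concave, as one sees by moving mass from a larger to a smaller entry one
   step at a time, so F(r) <= F(pi), and the monotonicity of eta finishes the proof. The convex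
   case is the concave one applied to -F. *)

definition symmetric_ent :: "(real list \<Rightarrow> real) \<Rightarrow> bool" where
  "symmetric_ent F \<longleftrightarrow> (\<forall>xs ys. prob_vec xs \<longrightarrow> mset xs = mset ys \<longrightarrow> F ys = F xs)"

definition expansible_ent :: "(real list \<Rightarrow> real) \<Rightarrow> bool" where
  "expansible_ent F \<longleftrightarrow> (\<forall>xs. prob_vec xs \<longrightarrow> F (xs @ [0]) = F xs)"

lemma gen_entropy_iff:
  "gen_entropy \<eta> F \<longleftrightarrow> (\<exists>B. \<forall>xs. prob_vec xs \<longrightarrow> \<bar>F xs\<bar> \<le> B) \<and> symmetric_ent F \<and>
     expansible_ent F \<and> (mono \<eta> \<and> concave_ent F \<or> antimono \<eta> \<and> convex_ent F)"
  by (simp add: gen_entropy_def symmetric_ent_def expansible_ent_def)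

lemma concave_ent_uminus:
  assumes "convex_ent F"
  shows "concave_ent (\<lambda>xs. - F xs)"
  unfolding concave_ent_def
proof (intro allI impI)
  fix xs ys :: "real list" and t :: real
  assume "prob_vec xs" "prob_vec ys" "length xs = length ys" "0 \<le> t" "t \<le> 1"
  with assms have "F (map2 (\<lambda>a b. t * a + (1 - t) * b) xs ys) \<le> t * F xs + (1 - t) * F ys"
    unfolding convex_ent_def by blast
  then show "t * - F xs + (1 - t) * - F ys \<le> - F (map2 (\<lambda>a b. t * a + (1 - t) * b) xs ys)"
    by simp
qed

lemma symmetric_ent_uminus: "symmetric_ent F \<Longrightarrow> symmetric_ent (\<lambda>xs. - F xs)"
  unfolding symmetric_ent_def by metis

lemma expansible_ent_uminus: "expansible_ent F \<Longrightarrow> expansible_ent (\<lambda>xs. - F xs)"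
  by (simp add: expansible_ent_def)

lemma prob_vec_map_upt:
  "prob_vec (map v [0..<N]) \<longleftrightarrow> (\<forall>i<N. 0 \<le> v i) \<and> (\<Sum>i<N. v i) = 1"
  by (auto simp: prob_vec_def sum_list_sum_nth atLeast0LessThan)

lemma prob_vec_mset_eq: "prob_vec xs \<Longrightarrow> mset xs = mset ys \<Longrightarrow> prob_vec ys"
  unfolding prob_vec_def by (metis mset_eq_setD sum_mset_sum_list)

lemma sum_list_take_map_upt: "l \<le> N \<Longrightarrow> sum_list (take l (map v [0..<N])) = (\<Sum>i<l. v i)"
  by (simp add: take_map sum_list_sum_nth atLeast0LessThan min_def)

lemma expansible_ent_append_zeros:
  assumes "expansible_ent F" and "prob_vec xs"
  shows "F (xs @ replicate m 0) = F xs"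
proof (induction m)
  case (Suc m)
  have "prob_vec (xs @ replicate m 0)"
    using \<open>prob_vec xs\<close> by (auto simp: prob_vec_def sum_list_replicate)
  have "F (xs @ replicate (Suc m) 0) = F ((xs @ replicate m 0) @ [0])"
    by (simp add: replicate_append_same)
  also have "\<dots> = F (xs @ replicate m 0)"
    using assms(1) \<open>prob_vec (xs @ replicate m 0)\<close> unfolding expansible_ent_def by blast
  also have "\<dots> = F xs"
    by (rule Suc.IH)
  finally show ?case .
qed simp

lemma has_sum_finite_sum:
  fixes f :: "'i \<Rightarrow> 'y \<Rightarrow> real"
  assumes "finite I" and "\<And>i. i \<in> I \<Longrightarrow> (f i has_sum s i) Y"
  shows "((\<lambda>y. \<Sum>i\<in>I. f i y) has_sum (\<Sum>i\<in>I. s i)) Y"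
  using assms by (induction I rule: finite_induct) (auto intro: has_sum_add)

subsection \<open>Jensen's inequality for countable mixtures\<close>

lemma concave_ent_combine:
  assumes "concave_ent F" "0 \<le> a" "0 \<le> b" "0 < a + b"
    and "prob_vec (map u [0..<N])" "prob_vec (map v [0..<N])"
  shows "a * F (map u [0..<N]) + b * F (map v [0..<N])
      \<le> (a + b) * F (map (\<lambda>j. (a * u j + b * v j) / (a + b)) [0..<N])"
proof -
  define t where "t = a / (a + b)"
  have t: "0 \<le> t" "t \<le> 1" "(a + b) * t = a" "(a + b) * (1 - t) = b"
    using assms(2-4) by (auto simp: t_def field_simps)
  have "t * x + (1 - t) * y = (a * x + b * y) / (a + b)" for x y
    using assms(4) by (simp add: t_def divide_simps)
  then have "map2 (\<lambda>x y. t * x + (1 - t) * y) (map u [0..<N]) (map v [0..<N])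
      = map (\<lambda>j. (a * u j + b * v j) / (a + b)) [0..<N]"
    by (intro nth_equalityI) auto
  moreover have "t * F (map u [0..<N]) + (1 - t) * F (map v [0..<N])
      \<le> F (map2 (\<lambda>x y. t * x + (1 - t) * y) (map u [0..<N]) (map v [0..<N]))"
    using assms(1) assms(5,6) t(1,2) unfolding concave_ent_def by simp
  ultimately have "(a + b) * (t * F (map u [0..<N]) + (1 - t) * F (map v [0..<N]))
      \<le> (a + b) * F (map (\<lambda>j. (a * u j + b * v j) / (a + b)) [0..<N])"
    using assms(4) by (simp add: mult_left_mono)
  then show ?thesis
    by (simp add: distrib_left mult.assoc[symmetric] t(3,4))
qed

lemma prob_vec_combine:
  assumes "0 \<le> a" "0 \<le> b" "0 < a + b"
    and "prob_vec (map u [0..<N])" "prob_vec (map v [0..<N])"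
  shows "prob_vec (map (\<lambda>j. (a * u j + b * v j) / (a + b)) [0..<N])"
proof -
  have "(\<Sum>j<N. (a * u j + b * v j) / (a + b)) = (\<Sum>j<N. a * u j + b * v j) / (a + b)"
    by (rule sum_divide_distrib[symmetric])
  also have "\<dots> = (a * (\<Sum>j<N. u j) + b * (\<Sum>j<N. v j)) / (a + b)"
    by (simp add: sum.distrib sum_distrib_left)
  also have "\<dots> = 1"
    using assms by (simp add: prob_vec_map_upt)
  finally show ?thesis
    using assms by (simp add: prob_vec_map_upt)
qed

(* The distinguished point v\<^sub>0 stands for the not yet summed tail of an infinite mixture. *)
lemma concave_ent_jensen_finite:
  assumes conc: "concave_ent F" and fin: "finite I"
    and "0 \<le> w\<^sub>0" and "\<forall>i\<in>I. 0 \<le> w i" and "w\<^sub>0 + sum w I = 1"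
    and "prob_vec (map v\<^sub>0 [0..<N])" and "\<forall>i\<in>I. prob_vec (map (v i) [0..<N])"
  shows "w\<^sub>0 * F (map v\<^sub>0 [0..<N]) + (\<Sum>i\<in>I. w i * F (map (v i) [0..<N]))
      \<le> F (map (\<lambda>j. w\<^sub>0 * v\<^sub>0 j + (\<Sum>i\<in>I. w i * v i j)) [0..<N])"
  using fin assms(3-7)
proof (induction I arbitrary: w\<^sub>0 v\<^sub>0 rule: finite_induct)
  case (insert a I)
  show ?case
  proof (cases "w\<^sub>0 + w a = 0")
    case True
    then have "w\<^sub>0 = 0" "w a = 0"
      using insert.prems(1,2) by auto
    then show ?thesis
      using insert.IH[of w\<^sub>0 v\<^sub>0] insert.prems insert.hyps by simp
  next
    case False
    then have pos: "0 < w\<^sub>0 + w a"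
      using insert.prems(1,2) by (simp add: add_nonneg_nonneg order_le_neq_trans)
    define v\<^sub>1 where "v\<^sub>1 = (\<lambda>j. (w\<^sub>0 * v\<^sub>0 j + w a * v a j) / (w\<^sub>0 + w a))"
    have "w\<^sub>0 * F (map v\<^sub>0 [0..<N]) + w a * F (map (v a) [0..<N])
        \<le> (w\<^sub>0 + w a) * F (map v\<^sub>1 [0..<N])"
      unfolding v\<^sub>1_def by (rule concave_ent_combine[OF conc]) (use insert.prems pos in auto)
    moreover have "(w\<^sub>0 + w a) * F (map v\<^sub>1 [0..<N]) + (\<Sum>i\<in>I. w i * F (map (v i) [0..<N]))
        \<le> F (map (\<lambda>j. (w\<^sub>0 + w a) * v\<^sub>1 j + (\<Sum>i\<in>I. w i * v i j)) [0..<N])"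
    proof (rule insert.IH)
      show "prob_vec (map v\<^sub>1 [0..<N])"
        unfolding v\<^sub>1_def using insert.prems pos by (intro prob_vec_combine) auto
      show "w\<^sub>0 + w a + sum w I = 1"
        using insert.prems(3) insert.hyps by (simp add: add.assoc)
    qed (use insert.prems pos in auto)
    moreover have "(\<lambda>j. (w\<^sub>0 + w a) * v\<^sub>1 j + (\<Sum>i\<in>I. w i * v i j))
        = (\<lambda>j. w\<^sub>0 * v\<^sub>0 j + (\<Sum>i\<in>insert a I. w i * v i j))"
      using pos insert.hyps by (simp add: v\<^sub>1_def fun_eq_iff add.assoc)
    ultimately show ?thesis
      using insert.hyps by (simp add: add.assoc)
  qed
qed simp

lemma prob_vec_map_upt_entry:
  assumes "prob_vec (map v [0..<N])" and "j < N"
  shows "0 \<le> v j" and "v j \<le> 1"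
proof -
  have nonneg: "\<forall>i<N. 0 \<le> v i" and total: "(\<Sum>i<N. v i) = 1"
    using assms(1) by (simp_all add: prob_vec_map_upt)
  show "0 \<le> v j"
    using nonneg assms(2) by simp
  have "v j \<le> (\<Sum>i<N. v i)"
    using nonneg assms(2) by (intro member_le_sum) auto
  then show "v j \<le> 1"
    using total by simp
qed

definition mixture :: "('y \<Rightarrow> real) \<Rightarrow> 'y set \<Rightarrow> ('y \<Rightarrow> nat \<Rightarrow> real) \<Rightarrow> nat \<Rightarrow> real" where
  "mixture w Y v j = (\<Sum>\<^sub>\<infinity>y\<in>Y. w y * v y j)"

context
  fixes w :: "'y \<Rightarrow> real" and Y :: "'y set" and v :: "'y \<Rightarrow> nat \<Rightarrow> real" and N :: nat
  assumes w_nonneg: "\<And>y. y \<in> Y \<Longrightarrow> 0 \<le> w y"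
    and w_summable: "w summable_on Y"
    and v_prob: "\<And>y. y \<in> Y \<Longrightarrow> prob_vec (map (v y) [0..<N])"
begin

lemma has_sum_mixture:
  assumes "j < N"
  shows "((\<lambda>y. w y * v y j) has_sum mixture w Y v j) Y"
proof -
  have "(\<lambda>y. w y * v y j) summable_on Y"
  proof (rule summable_on_comparison_test[OF w_summable])
    fix y assume "y \<in> Y"
    then have "0 \<le> v y j" "v y j \<le> 1"
      using prob_vec_map_upt_entry[OF v_prob assms] by auto
    then show "w y * v y j \<le> w y" and "0 \<le> w y * v y j"
      using w_nonneg[OF \<open>y \<in> Y\<close>] by (auto intro: mult_left_le)
  qed
  then show ?thesis
    unfolding mixture_def by simp
qed

lemma mixture_nonneg:
  assumes "j < N"
  shows "0 \<le> mixture w Y v j"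
  unfolding mixture_def
proof (rule infsum_nonneg)
  fix y assume "y \<in> Y"
  then show "0 \<le> w y * v y j"
    using w_nonneg prob_vec_map_upt_entry(1)[OF v_prob assms] by simp
qed

lemma has_sum_sum_mixture:
  assumes "l \<le> N"
  shows "((\<lambda>y. w y * (\<Sum>j<l. v y j)) has_sum (\<Sum>j<l. mixture w Y v j)) Y"
proof -
  have "((\<lambda>y. \<Sum>j<l. w y * v y j) has_sum (\<Sum>j<l. mixture w Y v j)) Y"
    using assms by (intro has_sum_finite_sum has_sum_mixture) auto
  then show ?thesis
    by (simp add: sum_distrib_left)
qed

lemma sum_mixture: "(\<Sum>j<N. mixture w Y v j) = infsum w Y"
proof -
  have "((\<lambda>y. w y * (\<Sum>j<N. v y j)) has_sum (\<Sum>j<N. mixture w Y v j)) Y"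
    by (rule has_sum_sum_mixture) simp
  moreover have "((\<lambda>y. w y * (\<Sum>j<N. v y j)) has_sum s) Y \<longleftrightarrow> (w has_sum s) Y" for s
    by (rule has_sum_cong) (use v_prob in \<open>simp add: prob_vec_map_upt\<close>)
  ultimately have "(w has_sum (\<Sum>j<N. mixture w Y v j)) Y"
    by simp
  then show ?thesis
    by (simp add: infsumI)
qed

end

lemma prob_vec_mixture:
  assumes w_nonneg: "\<And>y. y \<in> Y \<Longrightarrow> 0 \<le> w y" and w_sum: "(w has_sum 1) Y"
    and v_prob: "\<And>y. y \<in> Y \<Longrightarrow> prob_vec (map (v y) [0..<N])"
  shows "prob_vec (map (mixture w Y v) [0..<N])"
proof -
  have w_summable: "w summable_on Y"
    using w_sum by (auto simp: summable_on_def)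
  have "\<forall>j<N. 0 \<le> mixture w Y v j"
    using w_nonneg w_summable v_prob by (blast intro: mixture_nonneg)
  moreover have "(\<Sum>j<N. mixture w Y v j) = 1"
    using sum_mixture[of Y w v N] w_nonneg w_summable v_prob w_sum by (simp add: infsumI)
  ultimately show ?thesis
    by (simp add: prob_vec_map_upt)
qed

lemma mixture_split_finite:
  assumes w_nonneg: "\<And>y. y \<in> Y \<Longrightarrow> 0 \<le> w y" and w_sum: "(w has_sum 1) Y"
    and v_prob: "\<And>y. y \<in> Y \<Longrightarrow> prob_vec (map (v y) [0..<N])"
    and A: "finite A" "A \<subseteq> Y"
  obtains t where "prob_vec (map t [0..<N])"
    and "\<And>j. j < N \<Longrightarrow> mixture w Y v j = (1 - sum w A) * t j + (\<Sum>y\<in>A. w y * v y j)"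
proof -
  have w_tail: "(w has_sum (1 - sum w A)) (Y - A)"
    using has_sum_Diff[OF w_sum has_sum_finite[OF A(1)] A(2)] .
  then have tail_summable: "w summable_on (Y - A)"
    by (auto simp: summable_on_def)
  have tail_v_prob: "\<And>y. y \<in> Y - A \<Longrightarrow> prob_vec (map (v y) [0..<N])"
    using v_prob by blast
  have split: "mixture w Y v j = (\<Sum>y\<in>A. w y * v y j) + mixture w (Y - A) v j" if "j < N" for j
  proof -
    have "((\<lambda>y. w y * v y j) has_sum mixture w Y v j) Y"
      using w_nonneg w_sum v_prob that by (intro has_sum_mixture) (auto simp: summable_on_def)
    from has_sum_Diff[OF this has_sum_finite[OF A(1)] A(2)]
    have "mixture w (Y - A) v j = mixture w Y v j - (\<Sum>y\<in>A. w y * v y j)"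
      unfolding mixture_def by (simp add: infsumI)
    then show ?thesis
      by simp
  qed
  have tail_nonneg: "\<And>j. j < N \<Longrightarrow> 0 \<le> mixture w (Y - A) v j"
    using w_nonneg tail_summable tail_v_prob by (intro mixture_nonneg) auto
  have tail_total: "(\<Sum>j<N. mixture w (Y - A) v j) = 1 - sum w A"
    using w_nonneg tail_summable tail_v_prob w_tail by (subst sum_mixture) (auto simp: infsumI)
  show ?thesis
  proof (cases "sum w A = 1")
    case True
    then have "mixture w (Y - A) v j = 0" if "j < N" for j
      using tail_nonneg tail_total that sum_nonneg_eq_0_iff[of "{..<N}"] by auto
    then show ?thesis
      using that[of "mixture w Y v"] prob_vec_mixture[OF w_nonneg w_sum v_prob] split True
      by simp
  next
    case False
    define t where "t j = mixture w (Y - A) v j / (1 - sum w A)" for j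
    have "prob_vec (map t [0..<N])"
      using tail_nonneg tail_total False has_sum_nonneg[OF w_tail] w_nonneg
      by (auto simp: prob_vec_map_upt t_def sum_divide_distrib[symmetric])
    then show ?thesis
      using that[of t] split False by (simp add: t_def)
  qed
qed

(* F need not be continuous, so the tail of the mixture beyond a finite set is controlled only
   through the bound on |F|; it vanishes in the limit. *)
lemma concave_ent_jensen_finite_subset:
  assumes conc: "concave_ent F" and bound: "\<And>xs. prob_vec xs \<Longrightarrow> \<bar>F xs\<bar> \<le> B"
    and w_nonneg: "\<And>y. y \<in> Y \<Longrightarrow> 0 \<le> w y" and w_sum: "(w has_sum 1) Y"
    and v_prob: "\<And>y. y \<in> Y \<Longrightarrow> prob_vec (map (v y) [0..<N])"
    and A: "finite A" "A \<subseteq> Y"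
  shows "(\<Sum>y\<in>A. w y * F (map (v y) [0..<N]))
      \<le> F (map (mixture w Y v) [0..<N]) + (1 - sum w A) * B"
proof -
  obtain t where t: "prob_vec (map t [0..<N])"
    "\<And>j. j < N \<Longrightarrow> mixture w Y v j = (1 - sum w A) * t j + (\<Sum>y\<in>A. w y * v y j)"
    using mixture_split_finite[of Y w v N A] w_nonneg w_sum v_prob A by blast
  have T: "sum w A \<le> 1"
    using w_nonneg by (intro finite_sum_le_has_sum[OF w_sum A]) auto
  have "(1 - sum w A) * F (map t [0..<N]) + (\<Sum>y\<in>A. w y * F (map (v y) [0..<N]))
      \<le> F (map (\<lambda>j. (1 - sum w A) * t j + (\<Sum>y\<in>A. w y * v y j)) [0..<N])"
    using T t(1) w_nonneg v_prob A by (intro concave_ent_jensen_finite[OF conc]) auto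
  also have "map (\<lambda>j. (1 - sum w A) * t j + (\<Sum>y\<in>A. w y * v y j)) [0..<N]
      = map (mixture w Y v) [0..<N]"
    using t(2) by simp
  finally have jensen: "(1 - sum w A) * F (map t [0..<N]) + (\<Sum>y\<in>A. w y * F (map (v y) [0..<N]))
      \<le> F (map (mixture w Y v) [0..<N])" .
  have "(1 - sum w A) * - B \<le> (1 - sum w A) * F (map t [0..<N])"
    using bound[OF t(1)] T by (intro mult_left_mono) auto
  with jensen show ?thesis
    by (simp add: algebra_simps)
qed

theorem concave_ent_jensen_infsum:
  assumes conc: "concave_ent F" and bound: "\<And>xs. prob_vec xs \<Longrightarrow> \<bar>F xs\<bar> \<le> B"
    and w_nonneg: "\<And>y. y \<in> Y \<Longrightarrow> 0 \<le> w y" and w_sum: "(w has_sum 1) Y"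
    and v_prob: "\<And>y. y \<in> Y \<Longrightarrow> prob_vec (map (v y) [0..<N])"
  shows "(\<Sum>\<^sub>\<infinity>y\<in>Y. w y * F (map (v y) [0..<N])) \<le> F (map (mixture w Y v) [0..<N])"
proof -
  define g where "g = (\<lambda>y. w y * F (map (v y) [0..<N]))"
  define r where "r = F (map (mixture w Y v) [0..<N])"
  have "(\<lambda>y. norm (g y)) summable_on Y"
  proof (rule summable_on_comparison_test)
    show "(\<lambda>y. w y * B) summable_on Y"
      using w_sum by (intro summable_on_cmult_left) (auto simp: summable_on_def)
    fix y assume "y \<in> Y"
    have "norm (g y) = w y * \<bar>F (map (v y) [0..<N])\<bar>"
      using w_nonneg[OF \<open>y \<in> Y\<close>] by (simp add: g_def abs_mult)
    also have "\<dots> \<le> w y * B"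
      using bound[OF v_prob[OF \<open>y \<in> Y\<close>]] w_nonneg[OF \<open>y \<in> Y\<close>] by (rule mult_left_mono)
    finally show "norm (g y) \<le> w y * B" .
  qed simp
  then have "(sum g \<longlongrightarrow> infsum g Y) (finite_subsets_at_top Y)"
    using abs_summable_summable has_sum_def has_sum_infsum by blast
  moreover have "((\<lambda>A. r + (1 - sum w A) * B) \<longlongrightarrow> r + (1 - 1) * B) (finite_subsets_at_top Y)"
    using w_sum unfolding has_sum_def by (intro tendsto_intros)
  moreover have "\<forall>\<^sub>F A in finite_subsets_at_top Y. sum g A \<le> r + (1 - sum w A) * B"
    unfolding g_def r_def using concave_ent_jensen_finite_subset[OF conc bound w_nonneg w_sum v_prob]
    by (intro eventually_finite_subsets_at_top_weakI) auto
  ultimately have "infsum g Y \<le> r + (1 - 1) * B"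
    by (intro tendsto_le[OF finite_subsets_at_top_neq_bot])
  then show ?thesis
    by (simp add: g_def r_def)
qed

subsection \<open>Decreasing rearrangements\<close>

lemma sum_list_take_insort_key_uminus:
  fixes x :: real
  shows "x + sum_list (take l xs) \<le> sum_list (take (Suc l) (insort_key uminus x xs))"
proof (induction xs arbitrary: l)
  case (Cons y ys)
  show ?case
  proof (cases "y \<le> x")
    case False
    then show ?thesis
      using Cons[of "l - 1"] by (cases l) auto
  qed simp
qed simp

lemma sum_list_take_le_sort_key_uminus:
  fixes xs :: "real list"
  shows "sum_list (take l xs) \<le> sum_list (take l (sort_key uminus xs))"
proof (induction xs arbitrary: l)
  case (Cons x xs)
  show ?case
  proof (cases l)
    case (Suc l')
    have "sum_list (take l (x # xs)) \<le> x + sum_list (take l' (sort_key uminus xs))"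
      using Suc Cons[of l'] by simp
    also have "\<dots> \<le> sum_list (take l (sort_key uminus (x # xs)))"
      using Suc sum_list_take_insort_key_uminus by simp
    finally show ?thesis .
  qed simp
qed simp

lemma sort_key_uminus_nth_antimono:
  fixes xs :: "real list"
  assumes "i \<le> j" and "j < length xs"
  shows "sort_key uminus xs ! j \<le> sort_key uminus xs ! i"
proof -
  have "sorted (map uminus (sort_key uminus xs))"
    by (rule sorted_sort_key)
  then have "map uminus (sort_key uminus xs) ! i \<le> map uminus (sort_key uminus xs) ! j"
    using assms by (intro sorted_nth_mono) auto
  then show ?thesis
    using assms by simp
qed

lemma sort_key_uminus_nth_eq_0:
  fixes xs :: "real list"
  assumes nonneg: "\<forall>x\<in>set xs. 0 \<le> x" and few_pos: "length (filter ((<) 0) xs) \<le> k"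
    and "k \<le> j" and "j < length xs"
  shows "sort_key uminus xs ! j = 0"
proof (rule ccontr)
  let ?d = "sort_key uminus xs"
  assume "?d ! j \<noteq> 0"
  moreover have "?d ! j \<in> set xs"
    using \<open>j < length xs\<close> by (metis length_sort nth_mem set_sort)
  ultimately have pos: "0 < ?d ! j"
    using nonneg by force
  have "0 < x" if x: "x \<in> set (take (Suc j) ?d)" for x
  proof -
    obtain i where "i < length (take (Suc j) ?d)" "take (Suc j) ?d ! i = x"
      using x by (auto simp: in_set_conv_nth)
    then have "i \<le> j" "x = ?d ! i"
      by auto
    then show ?thesis
      using sort_key_uminus_nth_antimono[of i j xs] pos \<open>j < length xs\<close> by simp
  qed
  then have "Suc j = length (filter ((<) 0) (take (Suc j) ?d))"
    using \<open>j < length xs\<close> by simp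
  also have "\<dots> \<le> length (filter ((<) 0) ?d)"
    by (metis append_take_drop_id filter_append length_append le_add1)
  also have "\<dots> = length (filter ((<) 0) xs)"
    by (metis filter_sort length_sort)
  finally show False
    using few_pos \<open>k \<le> j\<close> by simp
qed

context
  fixes w :: "'y \<Rightarrow> real" and Y :: "'y set" and q :: "'y \<Rightarrow> real list" and N :: nat
  assumes w_nonneg: "\<And>y. y \<in> Y \<Longrightarrow> 0 \<le> w y" and w_sum: "(w has_sum 1) Y"
    and q_prob: "\<And>y. y \<in> Y \<Longrightarrow> prob_vec (q y)"
    and q_length: "\<And>y. y \<in> Y \<Longrightarrow> length (q y) = N"
begin

lemma map_nth_sort_key_uminus:
  "y \<in> Y \<Longrightarrow> map ((!) (sort_key uminus (q y))) [0..<N] = sort_key uminus (q y)"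
  using q_length by (metis length_sort map_nth)

lemma prob_vec_sort_key_uminus:
  assumes "y \<in> Y"
  shows "prob_vec (map ((!) (sort_key uminus (q y))) [0..<N])"
proof -
  have "prob_vec (sort_key uminus (q y))"
    using q_prob[OF assms] by (rule prob_vec_mset_eq) simp
  then show ?thesis
    by (simp add: map_nth_sort_key_uminus[OF assms])
qed

lemma has_sum_mixture_sort:
  "j < N \<Longrightarrow> ((\<lambda>y. w y * sort_key uminus (q y) ! j) has_sum
      mixture w Y (\<lambda>y. (!) (sort_key uminus (q y))) j) Y"
  using w_nonneg w_sum prob_vec_sort_key_uminus
  by (intro has_sum_mixture) (auto simp: summable_on_def)

lemma mixture_sort_antimono:
  assumes "i \<le> j" and "j < N"
  shows "mixture w Y (\<lambda>y. (!) (sort_key uminus (q y))) j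
      \<le> mixture w Y (\<lambda>y. (!) (sort_key uminus (q y))) i"
proof (rule has_sum_mono[OF has_sum_mixture_sort has_sum_mixture_sort])
  fix y assume "y \<in> Y"
  then show "w y * sort_key uminus (q y) ! j \<le> w y * sort_key uminus (q y) ! i"
    using sort_key_uminus_nth_antimono[of i j "q y"] assms w_nonneg q_length
    by (simp add: mult_left_mono)
qed (use assms in auto)

lemma mixture_sort_eq_0:
  assumes "\<And>y. y \<in> Y \<Longrightarrow> length (filter ((<) 0) (q y)) \<le> k" and "k \<le> j" and "j < N"
  shows "mixture w Y (\<lambda>y. (!) (sort_key uminus (q y))) j = 0"
proof -
  have "sort_key uminus (q y) ! j = 0" if "y \<in> Y" for y
    using q_prob[OF that] q_length[OF that] assms(1)[OF that] assms(2,3)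
    by (intro sort_key_uminus_nth_eq_0) (auto simp: prob_vec_def)
  then have "mixture w Y (\<lambda>y. (!) (sort_key uminus (q y))) j = (\<Sum>\<^sub>\<infinity>y\<in>Y. 0)"
    unfolding mixture_def by (intro infsum_cong) simp
  then show ?thesis
    by simp
qed

lemma has_sum_le_sum_mixture_sort:
  assumes "((\<lambda>y. w y * sum_list (take l (q y))) has_sum s) Y" and "l \<le> N"
  shows "s \<le> (\<Sum>j<l. mixture w Y (\<lambda>y. (!) (sort_key uminus (q y))) j)"
proof (rule has_sum_mono[OF assms(1)])
  show "((\<lambda>y. w y * (\<Sum>j<l. sort_key uminus (q y) ! j)) has_sum
      (\<Sum>j<l. mixture w Y (\<lambda>y. (!) (sort_key uminus (q y))) j)) Y"
    using w_nonneg w_sum prob_vec_sort_key_uminus \<open>l \<le> N\<close>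
    by (intro has_sum_sum_mixture) (auto simp: summable_on_def)
  fix y assume "y \<in> Y"
  have "sum_list (take l (q y)) \<le> sum_list (take l (sort_key uminus (q y)))"
    by (rule sum_list_take_le_sort_key_uminus)
  also have "\<dots> = (\<Sum>j<l. sort_key uminus (q y) ! j)"
    using sum_list_take_map_upt[OF \<open>l \<le> N\<close>, of "(!) (sort_key uminus (q y))"]
    by (simp add: map_nth_sort_key_uminus[OF \<open>y \<in> Y\<close>])
  finally show "w y * sum_list (take l (q y)) \<le> w y * (\<Sum>j<l. sort_key uminus (q y) ! j)"
    using w_nonneg[OF \<open>y \<in> Y\<close>] by (rule mult_left_mono)
qed

end

subsection \<open>Schur-concavity\<close>

definition shift_mass :: "(nat \<Rightarrow> real) \<Rightarrow> nat \<Rightarrow> nat \<Rightarrow> real \<Rightarrow> nat \<Rightarrow> real" where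
  "shift_mass y a b \<delta> = y(a := y a - \<delta>, b := y b + \<delta>)"

lemma sum_shift_mass:
  assumes "a < b"
  shows "(\<Sum>i<l. shift_mass y a b \<delta> i) = (\<Sum>i<l. y i) - (if a < l \<and> l \<le> b then \<delta> else 0)"
proof -
  have "shift_mass y a b \<delta> i = y i - (if i = a then \<delta> else 0) + (if i = b then \<delta> else 0)" for i
    using assms by (simp add: shift_mass_def)
  then have "(\<Sum>i<l. shift_mass y a b \<delta> i)
      = (\<Sum>i<l. y i) - (if a < l then \<delta> else 0) + (if b < l then \<delta> else 0)"
    by (simp add: sum.distrib sum_subtractf)
  then show ?thesis
    using assms by auto
qed

lemma mset_map_transpose:
  assumes "a < N" and "b < N"
  shows "mset (map (y \<circ> Transposition.transpose a b) [0..<N]) = mset (map y [0..<N])"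
proof -
  have "mset (map (Transposition.transpose a b) [0..<N])
      = image_mset (Transposition.transpose a b) (mset_set {0..<N})"
    by (simp add: mset_upt)
  also have "\<dots> = mset_set (Transposition.transpose a b ` {0..<N})"
    by (rule image_mset_mset_set) simp
  also have "Transposition.transpose a b ` {0..<N} = {0..<N}"
    using assms by (auto simp: Transposition.transpose_def image_iff split: if_splits)
  finally have "mset (map (Transposition.transpose a b) [0..<N]) = mset [0..<N]"
    by (simp add: mset_upt)
  then show ?thesis
    by (metis map_map mset_map)
qed

lemma concave_ent_shift_mass:
  assumes conc: "concave_ent F" and symm: "symmetric_ent F"
    and y_prob: "prob_vec (map y [0..<N])"
    and "a < N" "b < N" "a \<noteq> b" and "0 \<le> \<delta>" "\<delta> \<le> y a - y b"
  shows "F (map y [0..<N]) \<le> F (map (shift_mass y a b \<delta>) [0..<N])"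
proof (cases "\<delta> = 0")
  case True
  then show ?thesis
    by (simp add: shift_mass_def)
next
  case False
  then have gap: "0 < y a - y b"
    using assms(7,8) by linarith
  define t where "t = 1 - \<delta> / (y a - y b)"
  define z where "z = y \<circ> Transposition.transpose a b"
  have t: "0 \<le> t" "t \<le> 1" "(1 - t) * (y a - y b) = \<delta>"
    using assms(7,8) gap by (auto simp: t_def field_simps)
  have "t * y i + (1 - t) * z i = shift_mass y a b \<delta> i" for i
  proof -
    have "t * y a + (1 - t) * y b = y a - \<delta>" "t * y b + (1 - t) * y a = y b + \<delta>"
      using t(3) by (simp_all add: algebra_simps)
    then show ?thesis
      using \<open>a \<noteq> b\<close> by (auto simp: z_def shift_mass_def Transposition.transpose_def algebra_simps)
  qed
  then have comb: "map2 (\<lambda>u v. t * u + (1 - t) * v) (map y [0..<N]) (map z [0..<N])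
      = map (shift_mass y a b \<delta>) [0..<N]"
    by (intro nth_equalityI) auto
  have z_mset: "mset (map y [0..<N]) = mset (map z [0..<N])"
    unfolding z_def by (rule mset_map_transpose[OF assms(4,5), symmetric])
  then have "F (map z [0..<N]) = F (map y [0..<N])"
    using symm y_prob unfolding symmetric_ent_def by blast
  moreover have "t * F (map y [0..<N]) + (1 - t) * F (map z [0..<N])
      \<le> F (map (shift_mass y a b \<delta>) [0..<N])"
    using conc y_prob prob_vec_mset_eq[OF y_prob z_mset] t(1,2) comb
    unfolding concave_ent_def by (metis length_map)
  ultimately show ?thesis
    by (simp add: algebra_simps)
qed

lemma obtain_mismatch_run:
  fixes f g :: "nat \<Rightarrow> 'a"
  assumes "f 0 = g 0" and "f N = g N" and "l \<le> N" and "f l \<noteq> g l"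
  obtains a b where "a < l" "l < b" "b \<le> N" "f a = g a" "f b = g b"
    and "\<And>i. a < i \<Longrightarrow> i < b \<Longrightarrow> f i \<noteq> g i"
proof -
  define a where "a = Max {i. i \<le> l \<and> f i = g i}"
  define b where "b = Min {i. l \<le> i \<and> i \<le> N \<and> f i = g i}"
  have fin: "finite {i. i \<le> l \<and> f i = g i}" "finite {i. l \<le> i \<and> i \<le> N \<and> f i = g i}"
    by simp_all
  have "a \<in> {i. i \<le> l \<and> f i = g i}"
    unfolding a_def using fin(1) assms(1) by (intro Max_in) auto
  then have a: "a \<le> l" "f a = g a"
    by simp_all
  have a_max: "\<And>i. i \<le> l \<Longrightarrow> f i = g i \<Longrightarrow> i \<le> a"
    unfolding a_def using fin(1) by (intro Max_ge) auto
  have "b \<in> {i. l \<le> i \<and> i \<le> N \<and> f i = g i}"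
    unfolding b_def using fin(2) assms(2,3) by (intro Min_in) auto
  then have b: "l \<le> b" "b \<le> N" "f b = g b"
    by simp_all
  have b_min: "\<And>i. l \<le> i \<Longrightarrow> i \<le> N \<Longrightarrow> f i = g i \<Longrightarrow> b \<le> i"
    unfolding b_def using fin(2) by (intro Min_le) auto
  have "a \<noteq> l" "b \<noteq> l"
    using assms(4) a b by auto
  show ?thesis
  proof (rule that)
    show "\<And>i. a < i \<Longrightarrow> i < b \<Longrightarrow> f i \<noteq> g i"
      using a_max b_min b(2) by (meson leD le_cases less_le_trans order.strict_implies_order)
  qed (use a b \<open>a \<noteq> l\<close> \<open>b \<noteq> l\<close> in auto)
qed

lemma shift_mass_keeps_dominance:
  fixes x y :: "nat \<Rightarrow> real"
  assumes dom: "\<And>l. l \<le> N \<Longrightarrow> (\<Sum>i<l. x i) \<le> (\<Sum>i<l. y i)"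
    and "a < b" and "0 \<le> \<delta>"
    and gap: "\<And>l. a < l \<Longrightarrow> l \<le> b \<Longrightarrow> \<delta> \<le> (\<Sum>i<l. y i) - (\<Sum>i<l. x i)"
  shows "\<And>l. l \<le> N \<Longrightarrow> (\<Sum>i<l. x i) \<le> (\<Sum>i<l. shift_mass y a b \<delta> i)"
    and "{l. l < N \<and> (\<Sum>i<l. x i) < (\<Sum>i<l. shift_mass y a b \<delta> i)}
      \<subseteq> {l. l < N \<and> (\<Sum>i<l. x i) < (\<Sum>i<l. y i)}"
proof -
  have sum_y': "(\<Sum>i<l. shift_mass y a b \<delta> i) = (\<Sum>i<l. y i) - (if a < l \<and> l \<le> b then \<delta> else 0)"
    for l by (rule sum_shift_mass[OF \<open>a < b\<close>])
  show "(\<Sum>i<l. x i) \<le> (\<Sum>i<l. shift_mass y a b \<delta> i)" if "l \<le> N" for l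
    using sum_y'[of l] gap[of l] dom[OF that] by auto
  have "(\<Sum>i<l. shift_mass y a b \<delta> i) \<le> (\<Sum>i<l. y i)" for l
    using sum_y'[of l] \<open>0 \<le> \<delta>\<close> by simp
  then show "{l. l < N \<and> (\<Sum>i<l. x i) < (\<Sum>i<l. shift_mass y a b \<delta> i)}
      \<subseteq> {l. l < N \<and> (\<Sum>i<l. x i) < (\<Sum>i<l. y i)}"
    using less_le_trans by blast
qed

lemma majorization_shift_mass_step:
  fixes x y :: "nat \<Rightarrow> real"
  assumes x_antimono: "\<And>i j. i \<le> j \<Longrightarrow> j < N \<Longrightarrow> x j \<le> x i"
    and x_nonneg: "\<And>i. i < N \<Longrightarrow> 0 \<le> x i" and y_nonneg: "\<And>i. i < N \<Longrightarrow> 0 \<le> y i"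
    and totals: "(\<Sum>i<N. x i) = (\<Sum>i<N. y i)"
    and dom: "\<And>l. l \<le> N \<Longrightarrow> (\<Sum>i<l. x i) \<le> (\<Sum>i<l. y i)"
    and "l \<le> N" and "(\<Sum>i<l. x i) \<noteq> (\<Sum>i<l. y i)"
  obtains a b \<delta> where "a < b" "b < N" "0 < \<delta>" "\<delta> \<le> y a - y b"
    and "\<And>i. i < N \<Longrightarrow> 0 \<le> shift_mass y a b \<delta> i"
    and "\<And>l. l \<le> N \<Longrightarrow> (\<Sum>i<l. x i) \<le> (\<Sum>i<l. shift_mass y a b \<delta> i)"
    and "{l. l < N \<and> (\<Sum>i<l. x i) < (\<Sum>i<l. shift_mass y a b \<delta> i)}
      \<subset> {l. l < N \<and> (\<Sum>i<l. x i) < (\<Sum>i<l. y i)}"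
proof -
  define gap where "gap l = (\<Sum>i<l. y i) - (\<Sum>i<l. x i)" for l
  have "gap 0 = 0" "gap N = 0" "gap l \<noteq> 0"
    using totals assms(7) by (simp_all add: gap_def)
  then obtain a b where ab: "a < l" "l < b" "b \<le> N" "gap a = 0" "gap b = 0"
    and run: "\<And>i. a < i \<Longrightarrow> i < b \<Longrightarrow> gap i \<noteq> 0"
    using obtain_mismatch_run[of gap "\<lambda>_. 0" N l] \<open>l \<le> N\<close> by blast
  have gap_pos: "0 < gap i" if "a < i" "i < b" for i
    using run[OF that] dom[of i] that ab(3) by (simp add: gap_def)
  \<comment> \<open>Moving the smallest gap of the run turns one strict prefix inequality into an equality.\<close>
  define \<delta> where "\<delta> = Min (gap ` {a<..<b})"
  have \<delta>_le: "\<delta> \<le> gap i" if "a < i" "i < b" for i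
    unfolding \<delta>_def using that by (intro Min_le) auto
  obtain l\<^sub>0 where l\<^sub>0: "a < l\<^sub>0" "l\<^sub>0 < b" "\<delta> = gap l\<^sub>0"
    using Min_in[of "gap ` {a<..<b}"] ab(1,2) unfolding \<delta>_def by fastforce
  have \<delta>_pos: "0 < \<delta>"
    using gap_pos l\<^sub>0 by simp
  have "gap (Suc a) = y a - x a"
    using ab(4) by (simp add: gap_def)
  then have \<delta>_a: "\<delta> \<le> y a - x a"
    using \<delta>_le[of "Suc a"] ab(1,2) by simp
  have "gap b = gap (b - 1) + y (b - 1) - x (b - 1)"
    using ab(1,2) lessThan_Suc[of "b - 1"] by (simp add: gap_def)
  moreover have "a < b - 1"
    using ab(1,2) by linarith
  ultimately have "y (b - 1) < x (b - 1)"
    using gap_pos[of "b - 1"] ab(5) by simp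
  moreover have "x (b - 1) \<le> x a"
    using x_antimono[of a "b - 1"] ab by simp
  ultimately have \<delta>_ab: "\<delta> \<le> y a - y (b - 1)"
    using \<delta>_a by linarith
  have keep: "\<And>l. l \<le> N \<Longrightarrow> (\<Sum>i<l. x i) \<le> (\<Sum>i<l. shift_mass y a (b - 1) \<delta> i)"
    "{l. l < N \<and> (\<Sum>i<l. x i) < (\<Sum>i<l. shift_mass y a (b - 1) \<delta> i)}
      \<subseteq> {l. l < N \<and> (\<Sum>i<l. x i) < (\<Sum>i<l. y i)}"
    using \<open>a < b - 1\<close> \<delta>_pos \<delta>_le unfolding gap_def
    by (intro shift_mass_keeps_dominance[OF dom]; force)+
  have "l\<^sub>0 \<notin> {l. l < N \<and> (\<Sum>i<l. x i) < (\<Sum>i<l. shift_mass y a (b - 1) \<delta> i)}"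
    using sum_shift_mass[of a "b - 1" y \<delta> l\<^sub>0] \<open>a < b - 1\<close> l\<^sub>0 by (simp add: gap_def)
  moreover have "l\<^sub>0 \<in> {l. l < N \<and> (\<Sum>i<l. x i) < (\<Sum>i<l. y i)}"
    using gap_pos[OF l\<^sub>0(1,2)] l\<^sub>0 ab(3) by (simp add: gap_def)
  ultimately have fewer: "{l. l < N \<and> (\<Sum>i<l. x i) < (\<Sum>i<l. shift_mass y a (b - 1) \<delta> i)}
      \<subset> {l. l < N \<and> (\<Sum>i<l. x i) < (\<Sum>i<l. y i)}"
    using keep(2) by blast
  have "0 \<le> shift_mass y a (b - 1) \<delta> i" if "i < N" for i
    using that y_nonneg x_nonneg[of a] \<delta>_a \<delta>_pos ab by (auto simp: shift_mass_def)
  then show ?thesis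
    using that[of a "b - 1" \<delta>] keep(1) fewer \<open>a < b - 1\<close> ab(3) \<delta>_pos \<delta>_ab by fastforce
qed

theorem concave_ent_schur:
  fixes x y :: "nat \<Rightarrow> real"
  assumes conc: "concave_ent F" and symm: "symmetric_ent F"
    and x_antimono: "\<And>i j. i \<le> j \<Longrightarrow> j < N \<Longrightarrow> x j \<le> x i"
    and x_nonneg: "\<And>i. i < N \<Longrightarrow> 0 \<le> x i" and x_sum: "(\<Sum>i<N. x i) = 1"
    and "\<And>i. i < N \<Longrightarrow> 0 \<le> y i" and "(\<Sum>i<N. y i) = 1"
    and "\<And>l. l \<le> N \<Longrightarrow> (\<Sum>i<l. x i) \<le> (\<Sum>i<l. y i)"
  shows "F (map y [0..<N]) \<le> F (map x [0..<N])"
  using assms(6-8)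
proof (induction "card {l. l < N \<and> (\<Sum>i<l. x i) < (\<Sum>i<l. y i)}" arbitrary: y rule: less_induct)
  case (less y)
  show ?case
  proof (cases "\<forall>l\<le>N. (\<Sum>i<l. x i) = (\<Sum>i<l. y i)")
    case True
    have "y i = x i" if "i < N" for i
      using True[rule_format, of i] True[rule_format, of "Suc i"] that by simp
    then have "map y [0..<N] = map x [0..<N]"
      by (intro map_cong) auto
    then show ?thesis
      by (metis order_refl)
  next
    case False
    then obtain l where "l \<le> N" "(\<Sum>i<l. x i) \<noteq> (\<Sum>i<l. y i)"
      by blast
    have totals: "(\<Sum>i<N. x i) = (\<Sum>i<N. y i)"
      using x_sum less.prems(2) by simp
    obtain a b \<delta> where ab: "a < b" "b < N" "0 < \<delta>" "\<delta> \<le> y a - y b"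
      and nonneg: "\<And>i. i < N \<Longrightarrow> 0 \<le> shift_mass y a b \<delta> i"
      and dom: "\<And>l. l \<le> N \<Longrightarrow> (\<Sum>i<l. x i) \<le> (\<Sum>i<l. shift_mass y a b \<delta> i)"
      and fewer: "{l. l < N \<and> (\<Sum>i<l. x i) < (\<Sum>i<l. shift_mass y a b \<delta> i)}
        \<subset> {l. l < N \<and> (\<Sum>i<l. x i) < (\<Sum>i<l. y i)}"
      using majorization_shift_mass_step[OF x_antimono x_nonneg less.prems(1) totals less.prems(3)
          \<open>l \<le> N\<close> \<open>(\<Sum>i<l. x i) \<noteq> (\<Sum>i<l. y i)\<close>] by blast
    have total: "(\<Sum>i<N. shift_mass y a b \<delta> i) = 1"
      using sum_shift_mass[of a b y \<delta> N] ab less.prems(2) by simp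
    have "F (map y [0..<N]) \<le> F (map (shift_mass y a b \<delta>) [0..<N])"
      using less.prems ab by (intro concave_ent_shift_mass[OF conc symm]) (auto simp: prob_vec_map_upt)
    also have "\<dots> \<le> F (map x [0..<N])"
      using less.hyps[OF psubset_card_mono[OF _ fewer] nonneg total dom] by simp
    finally show ?thesis .
  qed
qed

subsection \<open>The vector pi\<close>

lemma initial_segment_average_ge:
  fixes a :: "nat \<Rightarrow> real"
  assumes antimono: "\<And>i j. s \<le> i \<Longrightarrow> i \<le> j \<Longrightarrow> j < e \<Longrightarrow> a j \<le> a i"
    and "s \<le> l" and "l \<le> e"
  shows "real (l - s) * (\<Sum>i\<in>{s..<e}. a i) \<le> real (e - s) * (\<Sum>i\<in>{s..<l}. a i)"
proof (cases "l = e")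
  case False
  then have "l < e"
    using \<open>l \<le> e\<close> by simp
  have head: "real (l - s) * a l \<le> (\<Sum>i\<in>{s..<l}. a i)"
    using sum_mono[of "{s..<l}" "\<lambda>_. a l" a] antimono \<open>l < e\<close> by simp
  have tail: "(\<Sum>i\<in>{l..<e}. a i) \<le> real (e - l) * a l"
    using sum_mono[of "{l..<e}" a "\<lambda>_. a l"] antimono \<open>s \<le> l\<close> by simp
  have "real (l - s) * (\<Sum>i\<in>{l..<e}. a i) \<le> real (l - s) * (real (e - l) * a l)"
    using tail by (intro mult_left_mono) auto
  also have "\<dots> = real (e - l) * (real (l - s) * a l)"
    by simp
  also have "\<dots> \<le> real (e - l) * (\<Sum>i\<in>{s..<l}. a i)"
    using head by (intro mult_left_mono) auto
  finally have "real (l - s) * (\<Sum>i\<in>{l..<e}. a i) \<le> real (e - l) * (\<Sum>i\<in>{s..<l}. a i)" .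
  moreover have "(\<Sum>i\<in>{s..<e}. a i) = (\<Sum>i\<in>{s..<l}. a i) + (\<Sum>i\<in>{l..<e}. a i)"
    using \<open>s \<le> l\<close> \<open>l \<le> e\<close> by (simp add: sum.atLeastLessThan_concat)
  moreover have "real (e - s) = real (l - s) + real (e - l)"
    using \<open>s \<le> l\<close> \<open>l \<le> e\<close> by simp
  ultimately show ?thesis
    by (simp add: algebra_simps)
qed simp

definition pi_level :: "nat \<Rightarrow> (nat \<Rightarrow> real) \<Rightarrow> nat \<Rightarrow> real" where
  "pi_level n p k = (\<Sum>i=jstar n p k..n. p i) / real (k - jstar n p k + 1)"

(* Vectors are 0-indexed functions on [0..<n], while p is indexed by {1..n}: entry i
   corresponds to p (Suc i). *)
definition pi_padded :: "nat \<Rightarrow> (nat \<Rightarrow> real) \<Rightarrow> nat \<Rightarrow> nat \<Rightarrow> real" where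
  "pi_padded n p k i = (if i < k then pi_vec n p k ! i else 0)"

lemma length_pi_vec: "length (pi_vec n p k) = k"
  by (simp add: pi_vec_def)

lemma nth_pi_vec:
  "i < k \<Longrightarrow> pi_vec n p k ! i = (if i < jstar n p k - 1 then p (Suc i) else pi_level n p k)"
  by (auto simp: pi_vec_def pi_level_def simp del: upt_Suc)

lemma map_pi_padded: "k \<le> n \<Longrightarrow> map (pi_padded n p k) [0..<n] = pi_vec n p k @ replicate (n - k) 0"
  by (rule nth_equalityI) (auto simp: pi_padded_def nth_append length_pi_vec)

context
  fixes n k :: nat and p :: "nat \<Rightarrow> real"
  assumes k_pos: "0 < k" and k_less: "k < n" and p_sum: "(\<Sum>x=1..n. p x) = 1"
    and p_antimono: "\<And>i j. 1 \<le> i \<Longrightarrow> i \<le> j \<Longrightarrow> j \<le> n \<Longrightarrow> p j \<le> p i"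
    and p_last_pos: "0 < p n"
begin

lemma p_pos: "1 \<le> i \<Longrightarrow> i \<le> n \<Longrightarrow> 0 < p i"
  using p_antimono[of i n] p_last_pos by simp

lemma jstar_bounds: "1 \<le> jstar n p k" "jstar n p k \<le> k" "jstar n p k - 1 < k"
proof -
  let ?P = "\<lambda>j. 1 \<le> j \<and> j \<le> k \<and> p j \<le> (\<Sum>i=j..n. p i) / real (k - j + 1)"
  have "p k \<le> (\<Sum>i=k..n. p i)"
    using k_pos k_less p_pos by (intro member_le_sum) (auto intro: less_imp_le)
  then have "?P k"
    using k_pos by simp
  then have "?P (jstar n p k)"
    unfolding jstar_def by (rule LeastI)
  then show "1 \<le> jstar n p k" "jstar n p k \<le> k" "jstar n p k - 1 < k"
    by auto
qed

lemma pi_level_nonneg: "0 \<le> pi_level n p k"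
  unfolding pi_level_def using jstar_bounds p_pos
  by (intro divide_nonneg_nonneg sum_nonneg) (auto intro: less_imp_le)

lemma pi_level_le:
  assumes "2 \<le> jstar n p k"
  shows "pi_level n p k \<le> p (jstar n p k - 1)"
proof -
  define J where "J = jstar n p k"
  have "J - 1 < (LEAST j. 1 \<le> j \<and> j \<le> k \<and> p j \<le> (\<Sum>i=j..n. p i) / real (k - j + 1))"
    using assms unfolding J_def jstar_def by simp
  then have "\<not> p (J - 1) \<le> (\<Sum>i=J-1..n. p i) / real (k - (J - 1) + 1)"
    using not_less_Least assms jstar_bounds unfolding J_def by fastforce
  moreover have "(\<Sum>i=J-1..n. p i) = p (J - 1) + (\<Sum>i=J..n. p i)"
  proof -
    have "{J-1..n} = insert (J - 1) {J..n}"
      using assms jstar_bounds k_less unfolding J_def by auto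
    then show ?thesis
      using assms unfolding J_def by simp
  qed
  moreover have "real (k - (J - 1) + 1) = real (k - J + 1) + 1"
    using assms jstar_bounds unfolding J_def by simp
  ultimately have "(\<Sum>i=J..n. p i) < real (k - J + 1) * p (J - 1)"
    by (simp add: field_simps)
  then show ?thesis
    unfolding pi_level_def J_def[symmetric] by (simp add: field_simps)
qed

lemma pi_level_total:
  "real (k - (jstar n p k - 1)) * pi_level n p k = 1 - (\<Sum>i<jstar n p k - 1. p (Suc i))"
proof -
  define J where "J = jstar n p k"
  have "(\<Sum>i<n. p (Suc i)) = 1"
    using p_sum sum.atLeast1_atMost_eq[of p n] by simp
  moreover have "(\<Sum>i<n. p (Suc i)) = (\<Sum>i<J-1. p (Suc i)) + (\<Sum>i\<in>{J-1..<n}. p (Suc i))"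
    using jstar_bounds k_less unfolding J_def lessThan_atLeast0
    by (intro sum.atLeastLessThan_concat[symmetric]) auto
  moreover have "(\<Sum>i\<in>{J-1..<n}. p (Suc i)) = (\<Sum>i=J..n. p i)"
    using jstar_bounds sum.shift_bounds_Suc_ivl[of p "J - 1" n] unfolding J_def
    by (simp add: atLeastLessThanSuc_atLeastAtMost)
  moreover have "real (k - (J - 1)) * pi_level n p k = (\<Sum>i=J..n. p i)"
  proof -
    have "k - (J - 1) = Suc (k - J)"
      using jstar_bounds unfolding J_def by simp
    then show ?thesis
      unfolding pi_level_def J_def[symmetric] by simp
  qed
  ultimately show ?thesis
    unfolding J_def by linarith
qed

lemma pi_padded_eq:
  "pi_padded n p k i
    = (if i < jstar n p k - 1 then p (Suc i) else if i < k then pi_level n p k else 0)"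
  using jstar_bounds(3) by (auto simp: pi_padded_def nth_pi_vec)

lemma pi_padded_nonneg: "0 \<le> pi_padded n p k i"
proof -
  have "0 < p (Suc i)" if "i < jstar n p k - 1"
    using that jstar_bounds(3) k_less by (intro p_pos) auto
  then show ?thesis
    using pi_level_nonneg by (auto simp: pi_padded_eq less_imp_le)
qed

lemma pi_padded_antimono:
  assumes "i \<le> j"
  shows "pi_padded n p k j \<le> pi_padded n p k i"
proof -
  have "p (Suc j) \<le> p (Suc i)" if "j < jstar n p k - 1"
    using p_antimono[of "Suc i" "Suc j"] assms that jstar_bounds k_less by simp
  moreover have "pi_level n p k \<le> p (Suc i)" if "i < jstar n p k - 1"
  proof -
    have "pi_level n p k \<le> p (jstar n p k - 1)"
      using that by (intro pi_level_le) linarith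
    also have "\<dots> \<le> p (Suc i)"
      using that jstar_bounds k_less by (intro p_antimono) auto
    finally show ?thesis .
  qed
  ultimately show ?thesis
    using assms pi_level_nonneg pi_padded_nonneg[of i] by (auto simp: pi_padded_eq)
qed

lemma sum_pi_padded_init:
  "l \<le> jstar n p k - 1 \<Longrightarrow> (\<Sum>i<l. pi_padded n p k i) = (\<Sum>i<l. p (Suc i))"
  by (intro sum.cong) (auto simp: pi_padded_eq)

lemma sum_pi_padded_level:
  assumes "jstar n p k - 1 \<le> l" and "l \<le> k"
  shows "(\<Sum>i<l. pi_padded n p k i)
    = (\<Sum>i<jstar n p k - 1. p (Suc i)) + real (l - (jstar n p k - 1)) * pi_level n p k"
proof -
  define J where "J = jstar n p k - 1"
  have "(\<Sum>i<l. pi_padded n p k i) = (\<Sum>i<J. pi_padded n p k i) + (\<Sum>i\<in>{J..<l}. pi_padded n p k i)"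
    using assms unfolding J_def lessThan_atLeast0 by (intro sum.atLeastLessThan_concat[symmetric]) auto
  moreover have "(\<Sum>i\<in>{J..<l}. pi_padded n p k i) = (\<Sum>i\<in>{J..<l}. pi_level n p k)"
    using assms unfolding J_def by (intro sum.cong) (auto simp: pi_padded_eq)
  ultimately show ?thesis
    using sum_pi_padded_init[of J] unfolding J_def by simp
qed

lemma sum_pi_padded_tail:
  assumes "k \<le> l"
  shows "(\<Sum>i<l. pi_padded n p k i) = 1"
proof -
  have "(\<Sum>i<l. pi_padded n p k i) = (\<Sum>i<k. pi_padded n p k i)"
    using assms by (intro sum.mono_neutral_right) (auto simp: pi_padded_def)
  also have "\<dots> = 1"
    using sum_pi_padded_level[of k] jstar_bounds pi_level_total by simp
  finally show ?thesis .
qed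

lemma sum_pi_padded_le_level:
  fixes r :: "nat \<Rightarrow> real"
  assumes r_antimono: "\<And>i j. i \<le> j \<Longrightarrow> j < n \<Longrightarrow> r j \<le> r i"
    and r_total: "(\<Sum>i<k. r i) = 1"
    and r_head: "(\<Sum>i<jstar n p k - 1. p (Suc i)) \<le> (\<Sum>i<jstar n p k - 1. r i)"
    and "jstar n p k - 1 \<le> l" and "l \<le> k"
  shows "(\<Sum>i<l. pi_padded n p k i) \<le> (\<Sum>i<l. r i)"
proof -
  define J where "J = jstar n p k - 1"
  define A P u m where "A = (\<Sum>i<J. r i)" and "P = (\<Sum>i<J. p (Suc i))"
    and "u = real (l - J)" and "m = real (k - J)"
  have split: "(\<Sum>i<l'. r i) = A + (\<Sum>i\<in>{J..<l'}. r i)" if "J \<le> l'" for l'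
    using that unfolding A_def lessThan_atLeast0 by (intro sum.atLeastLessThan_concat[symmetric]) auto
  have "u \<le> m" "0 < m"
    using assms(4,5) jstar_bounds unfolding u_def m_def J_def by auto
  \<comment> \<open>On \<open>[J, k)\<close> the vector pi is constant while r decreases, so r has the larger initial averages.\<close>
  have "u * (\<Sum>i\<in>{J..<k}. r i) \<le> m * (\<Sum>i\<in>{J..<l}. r i)"
    unfolding u_def m_def using assms(4,5) k_less unfolding J_def
    by (intro initial_segment_average_ge r_antimono) auto
  moreover have "1 - A = (\<Sum>i\<in>{J..<k}. r i)" "(\<Sum>i<l. r i) - A = (\<Sum>i\<in>{J..<l}. r i)"
    using split[of k] split[of l] r_total assms(4,5) unfolding J_def by auto
  ultimately have avg: "u * (1 - A) \<le> m * ((\<Sum>i<l. r i) - A)"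
    by simp
  have "m * pi_level n p k = 1 - P"
    using pi_level_total unfolding m_def P_def J_def .
  then have "m * (P + u * pi_level n p k) = m * P + u * (1 - P)"
    by (simp add: algebra_simps flip: \<open>m * pi_level n p k = 1 - P\<close>)
  also have "\<dots> \<le> m * A + u * (1 - A)"
  proof -
    have "0 \<le> (m - u) * (A - P)"
      using r_head \<open>u \<le> m\<close> unfolding A_def P_def J_def by simp
    moreover have "m * P + u * (1 - P) + (m - u) * (A - P) = m * A + u * (1 - A)"
      by (simp add: algebra_simps)
    ultimately show ?thesis
      by linarith
  qed
  also have "\<dots> \<le> m * (\<Sum>i<l. r i)"
    using avg by (simp add: algebra_simps)
  finally have "m * (P + u * pi_level n p k) \<le> m * (\<Sum>i<l. r i)" .
  then show ?thesis
    using sum_pi_padded_level[OF assms(4,5)] \<open>0 < m\<close> unfolding P_def u_def J_def by simp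
qed

lemma sum_pi_padded_le:
  fixes r :: "nat \<Rightarrow> real"
  assumes r_antimono: "\<And>i j. i \<le> j \<Longrightarrow> j < n \<Longrightarrow> r j \<le> r i"
    and r_zero: "\<And>j. k \<le> j \<Longrightarrow> j < n \<Longrightarrow> r j = 0" and r_sum: "(\<Sum>j<n. r j) = 1"
    and r_dom: "\<And>l. l \<le> n \<Longrightarrow> (\<Sum>i<l. p (Suc i)) \<le> (\<Sum>i<l. r i)"
    and "l \<le> n"
  shows "(\<Sum>i<l. pi_padded n p k i) \<le> (\<Sum>i<l. r i)"
proof -
  have r_tail: "(\<Sum>i<l. r i) = 1" if "k \<le> l" "l \<le> n" for l
  proof -
    have "(\<Sum>i<n. r i) = (\<Sum>i<l. r i) + (\<Sum>i\<in>{l..<n}. r i)"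
      using that unfolding lessThan_atLeast0 by (intro sum.atLeastLessThan_concat[symmetric]) auto
    moreover have "(\<Sum>i\<in>{l..<n}. r i) = 0"
      using r_zero that by (intro sum.neutral) auto
    ultimately show ?thesis
      using r_sum by simp
  qed
  consider "l \<le> jstar n p k - 1" | "jstar n p k - 1 \<le> l" "l \<le> k" | "k \<le> l"
    by linarith
  then show ?thesis
  proof cases
    case 1
    then show ?thesis
      using sum_pi_padded_init r_dom \<open>l \<le> n\<close> by simp
  next
    case 2
    then show ?thesis
      using r_dom[of "jstar n p k - 1"] r_tail[of k] jstar_bounds k_less
      by (intro sum_pi_padded_le_level r_antimono) auto
  next
    case 3
    then show ?thesis
      using sum_pi_padded_tail r_tail \<open>l \<le> n\<close> by simp
  qed
qed

lemma prob_vec_pi_padded: "prob_vec (map (pi_padded n p k) [0..<n])"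
  using pi_padded_nonneg sum_pi_padded_tail[of n] k_less by (simp add: prob_vec_map_upt)

lemma expansible_ent_pi_padded:
  assumes "expansible_ent F"
  shows "F (map (pi_padded n p k) [0..<n]) = F (pi_vec n p k)"
proof -
  have "prob_vec (pi_vec n p k)"
    using prob_vec_pi_padded k_less by (simp add: map_pi_padded prob_vec_def sum_list_replicate)
  then show ?thesis
    using k_less assms by (simp add: map_pi_padded expansible_ent_append_zeros)
qed

theorem concave_ent_le_pi_vec:
  fixes r :: "nat \<Rightarrow> real"
  assumes conc: "concave_ent F" and symm: "symmetric_ent F" and exp: "expansible_ent F"
    and r_prob: "prob_vec (map r [0..<n])"
    and r_antimono: "\<And>i j. i \<le> j \<Longrightarrow> j < n \<Longrightarrow> r j \<le> r i"
    and r_zero: "\<And>j. k \<le> j \<Longrightarrow> j < n \<Longrightarrow> r j = 0"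
    and r_dom: "\<And>l. l \<le> n \<Longrightarrow> (\<Sum>i<l. p (Suc i)) \<le> (\<Sum>i<l. r i)"
  shows "F (map r [0..<n]) \<le> F (pi_vec n p k)"
proof -
  have r_nonneg: "\<And>i. i < n \<Longrightarrow> 0 \<le> r i" and r_sum: "(\<Sum>i<n. r i) = 1"
    using r_prob by (simp_all add: prob_vec_map_upt)
  have "F (map r [0..<n]) \<le> F (map (pi_padded n p k) [0..<n])"
  proof (rule concave_ent_schur[OF conc symm])
    show "(\<Sum>i<l. pi_padded n p k i) \<le> (\<Sum>i<l. r i)" if "l \<le> n" for l
      using r_antimono r_zero r_sum r_dom that by (rule sum_pi_padded_le)
  qed (use pi_padded_antimono pi_padded_nonneg sum_pi_padded_tail[of n] k_less r_nonneg r_sum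
      in auto)
  also have "\<dots> = F (pi_vec n p k)"
    by (rule expansible_ent_pi_padded[OF exp])
  finally show ?thesis .
qed

end


subsection \<open>Sorted posteriors of a channel\<close>

lemma post_conv_map_upt:
  "post n p W y = map (\<lambda>i. p (Suc i) * W (Suc i) y / out_prob n p W y) [0..<n]"
  unfolding post_def by (rule nth_equalityI) (auto simp del: upt_Suc)

lemma out_prob_conv_sum_lessThan: "out_prob n p W y = (\<Sum>i<n. p (Suc i) * W (Suc i) y)"
  unfolding out_prob_def using sum.atLeast1_atMost_eq[of "\<lambda>x. p x * W x y" n] by simp

lemma length_post: "length (post n p W y) = n"
  by (simp add: post_def)

definition sorted_posterior_mean :: "nat \<Rightarrow> (nat \<Rightarrow> real) \<Rightarrow> (nat \<Rightarrow> 'y \<Rightarrow> real) \<Rightarrow> nat \<Rightarrow> real" where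
  "sorted_posterior_mean n p W = mixture (out_prob n p W) {y. 0 < out_prob n p W y}
     (\<lambda>y. (!) (sort_key uminus (post n p W y)))"

context
  fixes n :: nat and p :: "nat \<Rightarrow> real" and W :: "nat \<Rightarrow> 'y \<Rightarrow> real"
  assumes p_pos: "\<And>x. x \<in> {1..n} \<Longrightarrow> 0 < p x" and p_sum: "(\<Sum>x=1..n. p x) = 1"
    and ch: "channel n W"
begin

lemma channel_nonneg: "x \<in> {1..n} \<Longrightarrow> 0 \<le> W x y"
  using ch by (simp add: channel_def)

lemma out_prob_nonneg: "0 \<le> out_prob n p W y"
  unfolding out_prob_def using p_pos channel_nonneg by (intro sum_nonneg) (simp add: less_imp_le)

lemma has_sum_channel_support:
  assumes "x \<in> {1..n}"
  shows "((\<lambda>y. W x y) has_sum 1) {y. 0 < out_prob n p W y}"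
proof -
  have "W x y = 0" if "\<not> 0 < out_prob n p W y" for y
  proof -
    have "out_prob n p W y = 0"
      using that out_prob_nonneg[of y] by simp
    then have "p x * W x y = 0"
      unfolding out_prob_def using sum_nonneg_eq_0_iff[of "{1..n}" "\<lambda>x. p x * W x y"]
        p_pos channel_nonneg assms by (simp add: less_imp_le)
    then show ?thesis
      using p_pos[OF assms] by simp
  qed
  then have "((\<lambda>y. W x y) has_sum 1) {y. 0 < out_prob n p W y} \<longleftrightarrow> ((\<lambda>y. W x y) has_sum 1) UNIV"
    by (intro has_sum_cong_neutral) auto
  then show ?thesis
    using ch assms by (simp add: channel_def)
qed

lemma has_sum_out_prob: "(out_prob n p W has_sum 1) {y. 0 < out_prob n p W y}"
proof -
  have "((\<lambda>y. \<Sum>x=1..n. p x * W x y) has_sum (\<Sum>x=1..n. p x * 1)) {y. 0 < out_prob n p W y}"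
    by (intro has_sum_finite_sum has_sum_cmult_right has_sum_channel_support) auto
  also have "(\<lambda>y. \<Sum>x=1..n. p x * W x y) = out_prob n p W"
    by (simp add: fun_eq_iff out_prob_def)
  finally show ?thesis
    using p_sum by simp
qed

lemma prob_vec_post:
  assumes "0 < out_prob n p W y"
  shows "prob_vec (post n p W y)"
proof -
  have "(\<Sum>i<n. p (Suc i) * W (Suc i) y / out_prob n p W y) = 1"
    using assms by (simp add: sum_divide_distrib[symmetric] out_prob_conv_sum_lessThan[symmetric])
  moreover have "0 \<le> p (Suc i) * W (Suc i) y / out_prob n p W y" if "i < n" for i
    using that p_pos[of "Suc i"] channel_nonneg[of "Suc i" y] out_prob_nonneg[of y] by simp
  ultimately show ?thesis
    by (simp add: post_conv_map_upt prob_vec_map_upt)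
qed

lemma has_sum_post_prefix:
  assumes "l \<le> n"
  shows "((\<lambda>y. out_prob n p W y * sum_list (take l (post n p W y))) has_sum (\<Sum>i<l. p (Suc i)))
      {y. 0 < out_prob n p W y}"
proof -
  have "((\<lambda>y. \<Sum>i<l. p (Suc i) * W (Suc i) y) has_sum (\<Sum>i<l. p (Suc i) * 1))
      {y. 0 < out_prob n p W y}"
    using assms by (intro has_sum_finite_sum has_sum_cmult_right has_sum_channel_support) auto
  moreover have "((\<lambda>y. \<Sum>i<l. p (Suc i) * W (Suc i) y) has_sum s) {y. 0 < out_prob n p W y}
      \<longleftrightarrow> ((\<lambda>y. out_prob n p W y * sum_list (take l (post n p W y))) has_sum s)
        {y. 0 < out_prob n p W y}" for s
    using assms by (intro has_sum_cong)
      (simp add: post_conv_map_upt sum_list_take_map_upt sum_distrib_left)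
  ultimately show ?thesis
    by simp
qed

lemma length_filter_pos_post:
  "length (filter ((<) 0) (post n p W y)) \<le> card {x\<in>{1..n}. 0 < W x y}"
proof -
  let ?f = "\<lambda>x. p x * W x y / out_prob n p W y"
  have "length (filter ((<) 0) (post n p W y)) = card ({x. 0 < ?f x} \<inter> {1..n})"
    by (simp add: post_def filter_map distinct_length_filter comp_def atLeastLessThanSuc_atLeastAtMost
        del: upt_Suc)
  also have "\<dots> \<le> card {x\<in>{1..n}. 0 < W x y}"
  proof (rule card_mono)
    show "{x. 0 < ?f x} \<inter> {1..n} \<subseteq> {x\<in>{1..n}. 0 < W x y}"
    proof
      fix x assume x: "x \<in> {x. 0 < ?f x} \<inter> {1..n}"
      then have "0 < p x"
        using p_pos by blast
      with x out_prob_nonneg[of y] show "x \<in> {x\<in>{1..n}. 0 < W x y}"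
        by (auto simp: zero_less_divide_iff zero_less_mult_iff)
    qed
  qed simp
  finally show ?thesis .
qed

lemma prob_vec_sorted_posterior_mean: "prob_vec (map (sorted_posterior_mean n p W) [0..<n])"
  unfolding sorted_posterior_mean_def
  using out_prob_nonneg has_sum_out_prob prob_vec_post
  by (intro prob_vec_mixture prob_vec_sort_key_uminus[where q = "post n p W"])
    (auto simp: post_conv_map_upt)

lemma sorted_posterior_mean_antimono:
  "i \<le> j \<Longrightarrow> j < n \<Longrightarrow> sorted_posterior_mean n p W j \<le> sorted_posterior_mean n p W i"
  unfolding sorted_posterior_mean_def
  using out_prob_nonneg has_sum_out_prob prob_vec_post
  by (intro mixture_sort_antimono) (auto simp: post_conv_map_upt)

lemma sorted_posterior_mean_eq_0:
  assumes "feasible n k W" and "k \<le> j" and "j < n"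
  shows "sorted_posterior_mean n p W j = 0"
  unfolding sorted_posterior_mean_def
proof (rule mixture_sort_eq_0[where k = k])
  show "length (filter ((<) 0) (post n p W y)) \<le> k" for y
    using length_filter_pos_post[of y] assms(1) by (auto simp: feasible_def intro: order_trans)
qed (use out_prob_nonneg has_sum_out_prob prob_vec_post assms(2,3) in
    \<open>auto simp: post_conv_map_upt\<close>)

lemma sum_sorted_posterior_mean_ge:
  "l \<le> n \<Longrightarrow> (\<Sum>i<l. p (Suc i)) \<le> (\<Sum>i<l. sorted_posterior_mean n p W i)"
  unfolding sorted_posterior_mean_def
  using out_prob_nonneg has_sum_out_prob prob_vec_post has_sum_post_prefix
  by (intro has_sum_le_sum_mixture_sort) (auto simp: post_conv_map_upt)

lemma infsum_post_le_sorted_posterior_mean: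
  assumes conc: "concave_ent F" and bound: "\<And>xs. prob_vec xs \<Longrightarrow> \<bar>F xs\<bar> \<le> B"
    and symm: "symmetric_ent F"
  shows "(\<Sum>\<^sub>\<infinity>y\<in>{y. 0 < out_prob n p W y}. out_prob n p W y * F (post n p W y))
    \<le> F (map (sorted_posterior_mean n p W) [0..<n])"
proof -
  have "F (post n p W y) = F (map ((!) (sort_key uminus (post n p W y))) [0..<n])"
    if "y \<in> {y. 0 < out_prob n p W y}" for y
  proof -
    have "map ((!) (sort_key uminus (post n p W y))) [0..<n] = sort_key uminus (post n p W y)"
      by (metis length_sort map_nth length_post)
    moreover have "F (sort_key uminus (post n p W y)) = F (post n p W y)"
      using symm prob_vec_post that unfolding symmetric_ent_def by (metis mem_Collect_eq mset_sort)
    ultimately show ?thesis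
      by simp
  qed
  then have "(\<Sum>\<^sub>\<infinity>y\<in>{y. 0 < out_prob n p W y}. out_prob n p W y * F (post n p W y))
    = (\<Sum>\<^sub>\<infinity>y\<in>{y. 0 < out_prob n p W y}.
        out_prob n p W y * F (map ((!) (sort_key uminus (post n p W y))) [0..<n]))"
    by (intro infsum_cong) simp
  also have "\<dots> \<le> F (map (sorted_posterior_mean n p W) [0..<n])"
    unfolding sorted_posterior_mean_def
    using out_prob_nonneg has_sum_out_prob prob_vec_post
    by (intro concave_ent_jensen_infsum[OF conc bound] prob_vec_sort_key_uminus[where q = "post n p W"])
      (auto simp: post_conv_map_upt)
  finally show ?thesis .
qed

end

theorem infsum_post_le_pi_vec:
  fixes W :: "nat \<Rightarrow> 'y \<Rightarrow> real"
  assumes k_pos: "0 < k" and k_less: "k < n" and p_sum: "(\<Sum>x=1..n. p x) = 1"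
    and p_antimono: "\<And>i j. 1 \<le> i \<Longrightarrow> i \<le> j \<Longrightarrow> j \<le> n \<Longrightarrow> p j \<le> p i"
    and p_last_pos: "0 < p n"
    and ch: "channel n W" and fe: "feasible n k W"
    and conc: "concave_ent F" and bound: "\<And>xs. prob_vec xs \<Longrightarrow> \<bar>F xs\<bar> \<le> B"
    and symm: "symmetric_ent F" and exp: "expansible_ent F"
  shows "(\<Sum>\<^sub>\<infinity>y\<in>{y. 0 < out_prob n p W y}. out_prob n p W y * F (post n p W y))
    \<le> F (pi_vec n p k)"
proof -
  have p_pos: "\<And>x. x \<in> {1..n} \<Longrightarrow> 0 < p x"
    using p_antimono p_last_pos by (meson atLeastAtMost_iff less_le_trans order_refl)
  have "(\<Sum>\<^sub>\<infinity>y\<in>{y. 0 < out_prob n p W y}. out_prob n p W y * F (post n p W y))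
      \<le> F (map (sorted_posterior_mean n p W) [0..<n])"
    using p_pos p_sum ch by (rule infsum_post_le_sorted_posterior_mean[OF _ _ _ conc bound symm])
  also have "\<dots> \<le> F (pi_vec n p k)"
  proof (rule concave_ent_le_pi_vec)
    show "prob_vec (map (sorted_posterior_mean n p W) [0..<n])"
      using p_pos p_sum ch by (rule prob_vec_sorted_posterior_mean)
    show "\<And>i j. i \<le> j \<Longrightarrow> j < n \<Longrightarrow> sorted_posterior_mean n p W j \<le> sorted_posterior_mean n p W i"
      using p_pos p_sum ch by (rule sorted_posterior_mean_antimono)
    show "\<And>j. k \<le> j \<Longrightarrow> j < n \<Longrightarrow> sorted_posterior_mean n p W j = 0"
      using p_pos p_sum ch fe by (rule sorted_posterior_mean_eq_0)
    show "\<And>l. l \<le> n \<Longrightarrow> (\<Sum>i<l. p (Suc i)) \<le> (\<Sum>i<l. sorted_posterior_mean n p W i)"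
      using p_pos p_sum ch by (rule sum_sorted_posterior_mean_ge)
  qed (use k_pos k_less p_sum p_antimono p_last_pos conc symm exp in auto)
  finally show ?thesis .
qed

theorem lemma1:
  fixes n k :: nat and p :: "nat \<Rightarrow> real" and \<eta> :: "real \<Rightarrow> real"
    and F :: "real list \<Rightarrow> real" and W :: "nat \<Rightarrow> 'y \<Rightarrow> real"
  assumes "0 < k" and "k < n"
    and "(\<Sum>x=1..n. p x) = 1"
    and "\<And>i j. 1 \<le> i \<Longrightarrow> i \<le> j \<Longrightarrow> j \<le> n \<Longrightarrow> p j \<le> p i"
    and "0 < p n"
    and "gen_entropy \<eta> F"
    and "channel n W" and "feasible n k W"
  shows "cond_ent \<eta> F n p W \<le> \<eta> (F (pi_vec n p k))"
proof -
  obtain B where bound: "\<And>xs. prob_vec xs \<Longrightarrow> \<bar>F xs\<bar> \<le> B"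
    and symm: "symmetric_ent F" and exp: "expansible_ent F"
    and cases: "mono \<eta> \<and> concave_ent F \<or> antimono \<eta> \<and> convex_ent F"
    using assms(6) unfolding gen_entropy_iff by blast
  define S where "S G = (\<Sum>\<^sub>\<infinity>y\<in>{y. 0 < out_prob n p W y}. out_prob n p W y * G (post n p W y))"
    for G :: "real list \<Rightarrow> real"
  have concave_case: "S G \<le> G (pi_vec n p k)" if "concave_ent G" "symmetric_ent G"
    "expansible_ent G" "\<And>xs. prob_vec xs \<Longrightarrow> \<bar>G xs\<bar> \<le> B" for G
    unfolding S_def using assms(1-5,7,8) that(1,4,2,3) by (rule infsum_post_le_pi_vec)
  from cases have "\<eta> (S F) \<le> \<eta> (F (pi_vec n p k))"
  proof
    assume "mono \<eta> \<and> concave_ent F"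
    then show ?thesis
      using concave_case[of F] bound symm exp by (simp add: monoD)
  next
    assume "antimono \<eta> \<and> convex_ent F"
    moreover have "S (\<lambda>xs. - F xs) \<le> - F (pi_vec n p k)"
      using bound symm exp \<open>antimono \<eta> \<and> convex_ent F\<close>
      by (intro concave_case concave_ent_uminus symmetric_ent_uminus expansible_ent_uminus) auto
    ultimately show ?thesis
      by (simp add: S_def infsum_uminus antimonoD)
  qed
  then show ?thesis
    by (simp add: cond_ent_def S_def)
qed

end
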